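(* Let $p/q$ be an even rational parameter, $\omega=p+q$, and let $B$ be any block. For each even integer $k\in[0,\omega]$ there are exactly $2$ lines of $\mathcal H$ and exactly $2$ lines of $\mathcal V$ which have capacity $k$ and intersect $B$. Each such line $L$ carries exactly $k$ light points in $B$ (i.e. the light count of $L\cap B$ equals $k$).
   Context: An even rational parameter is a rational $p/q\in(0,1)$, $p,q$ positive coprime integers, with $pq$ even. Put $\omega=p+q$, $P=2p/\omega$, $Q=2q/\omega$. Families of lines: $\mathcal H$ = lines $y=n$, $\mathcal V$ = lines $x=n$ ($n\in\mathbb Z$), $\mathcal P$ = lines of slope $-P$ with integer $y$-intercept, $\mathcal Q$ = lines of slope $-Q$ with integer $y$-intercept. Functions mod $2\mathbb Z$, values represented in $(-1,1]$: $F_H(x,y)=2Py$, $F_V(x,y)=2Px$, $F_P(x,y)=Py+P^2x+1$, $F_Q(x,y)=Py+PQx+1$. The capacity of a line $L\in\mathcal H$ (resp. $\mathcal V$) is $|\omega F_H(L)|$ (resp. $|\omega F_V(L)|$), these functions being constant on such lines. A unit segment is an edge of a unit square of the integer grid; horizontal ones lie on lines of $\mathcal H$ (set $A=H$), vertical ones on lines of $\mathcal V$ (set $A=V$). A point $z$ of a unit segment $s$ is a light point of $s$ if for some $B\in\{P,Q\}$, $z$ lies on a line of $\mathcal B$ and $F_A(z)F_B(z)>0$, $|F_B(z)|<|F_A(z)|$. For a line $L\in\mathcal H\cup\mathcal V$ and a set $B$, the light count of $L\cap B$ is the number of distinct points of $L\cap B$ that are light points of some unit segment contained in $L$, where a light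 point that is the midpoint of a horizontal unit segment is counted twice. Blocks: let $\Lambda$ be the lattice in $\mathbb Z^2$ generated by $(\omega^2,0)$ and $(0,\omega)$; a block is a square $[0,\omega]^2+\ell$ with $\ell\in\Lambda$. *)

theory Defs
  imports Complex_Main
begin

definition even_rat_param :: "nat \<Rightarrow> nat \<Rightarrow> bool" where
  "even_rat_param p q \<longleftrightarrow> 0 < p \<and> p < q \<and> coprime p q \<and> even (p * q)"

definition omega :: "nat \<Rightarrow> nat \<Rightarrow> nat" where
  "omega p q = p + q"

definition bigP :: "nat \<Rightarrow> nat \<Rightarrow> real" where
  "bigP p q = 2 * real p / real (omega p q)"

definition bigQ :: "nat \<Rightarrow> nat \<Rightarrow> real" where
  "bigQ p q = 2 * real q / real (omega p q)"

text \<open>Representative of t mod 2Z in the interval (-1,1].\<close>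
definition rep2 :: "real \<Rightarrow> real" where
  "rep2 t = t - 2 * of_int \<lceil>(t - 1) / 2\<rceil>"

definition F_H :: "nat \<Rightarrow> nat \<Rightarrow> real \<times> real \<Rightarrow> real" where
  "F_H p q z = rep2 (2 * bigP p q * snd z)"

definition F_V :: "nat \<Rightarrow> nat \<Rightarrow> real \<times> real \<Rightarrow> real" where
  "F_V p q z = rep2 (2 * bigP p q * fst z)"

definition F_P :: "nat \<Rightarrow> nat \<Rightarrow> real \<times> real \<Rightarrow> real" where
  "F_P p q z = rep2 (bigP p q * snd z + (bigP p q)\<^sup>2 * fst z + 1)"

definition F_Q :: "nat \<Rightarrow> nat \<Rightarrow> real \<times> real \<Rightarrow> real" where
  "F_Q p q z = rep2 (bigP p q * snd z + bigP p q * bigQ p q * fst z + 1)"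

definition Hlines :: "(real \<times> real) set set" where
  "Hlines = {{z. snd z = of_int n} | n. True}"

definition Vlines :: "(real \<times> real) set set" where
  "Vlines = {{z. fst z = of_int n} | n. True}"

definition Plines :: "nat \<Rightarrow> nat \<Rightarrow> (real \<times> real) set set" where
  "Plines p q = {{z. snd z = - bigP p q * fst z + of_int c} | c. True}"

definition Qlines :: "nat \<Rightarrow> nat \<Rightarrow> (real \<times> real) set set" where
  "Qlines p q = {{z. snd z = - bigQ p q * fst z + of_int c} | c. True}"

text \<open>Capacity of a line of H (resp. V): |omega F_H| (resp. |omega F_V|), evaluated
  at a point of the line (these functions are constant on such lines).\<close>
definition capacity :: "nat \<Rightarrow> nat \<Rightarrow> (real \<times> real) set \<Rightarrow> real" where
  "capacity p q L =
     (if L \<in> Hlines then \<bar>real (omega p q) * F_H p q (SOME z. z \<in> L)\<bar>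
      else \<bar>real (omega p q) * F_V p q (SOME z. z \<in> L)\<bar>)"

definition hseg :: "(real \<times> real) set \<Rightarrow> bool" where
  "hseg s \<longleftrightarrow> (\<exists>m n::int. s = {(x, of_int n) | x. of_int m \<le> x \<and> x \<le> of_int m + 1})"

definition vseg :: "(real \<times> real) set \<Rightarrow> bool" where
  "vseg s \<longleftrightarrow> (\<exists>m n::int. s = {(of_int m, y) | y. of_int n \<le> y \<and> y \<le> of_int n + 1})"

definition light_wrt ::
  "nat \<Rightarrow> nat \<Rightarrow> (real \<times> real \<Rightarrow> real) \<Rightarrow> real \<times> real \<Rightarrow> bool" where
  "light_wrt p q FA z \<longleftrightarrow>
     (z \<in> \<Union>(Plines p q) \<and> FA z * F_P p q z > 0 \<and> \<bar>F_P p q z\<bar> < \<bar>FA z\<bar>) \<or>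
     (z \<in> \<Union>(Qlines p q) \<and> FA z * F_Q p q z > 0 \<and> \<bar>F_Q p q z\<bar> < \<bar>FA z\<bar>)"

definition light_point ::
  "nat \<Rightarrow> nat \<Rightarrow> (real \<times> real) set \<Rightarrow> real \<times> real \<Rightarrow> bool" where
  "light_point p q s z \<longleftrightarrow> z \<in> s \<and>
     ((hseg s \<and> light_wrt p q (F_H p q) z) \<or> (vseg s \<and> light_wrt p q (F_V p q) z))"

definition hmidpoint :: "real \<times> real \<Rightarrow> bool" where
  "hmidpoint z \<longleftrightarrow> (\<exists>m n::int. z = (of_int m + 1/2, of_int n))"

definition light_count ::
  "nat \<Rightarrow> nat \<Rightarrow> (real \<times> real) set \<Rightarrow> (real \<times> real) set \<Rightarrow> nat" where
  "light_count p q L S =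
     (let X = {z \<in> L \<inter> S. \<exists>s. (hseg s \<or> vseg s) \<and> s \<subseteq> L \<and> light_point p q s z}
      in card X + card {z \<in> X. hmidpoint z})"

definition blocks :: "nat \<Rightarrow> nat \<Rightarrow> (real \<times> real) set set" where
  "blocks p q = {{(x, y). real_of_int (i * int (omega p q)^2) \<le> x \<and>
                         x \<le> real_of_int (i * int (omega p q)^2) + real (omega p q) \<and>
                         real_of_int (j * int (omega p q)) \<le> y \<and>
                         y \<le> real_of_int (j * int (omega p q)) + real (omega p q)}
                 | i j :: int. True}"

end

theory Submission
  imports Defs
begin

(*
  The functions F_H, F_V, F_P, F_Q take values in (1/\<omega>)\<int> modulo 2, so everything reduces to
  residues modulo 2\<omega> represented in (-\<omega>, \<omega>] (sym_mod).  The lines y = n and x = n have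
  signed capacity sym_mod \<omega> (4pn), and on the P- or Q-line with intercept c the value is
  sym_mod \<omega> (\<omega> + 2pc).  Since \<omega> is odd and coprime to 2p, both run through every residue of
  the right parity exactly once on \<omega> consecutive integers.  So of the \<omega> + 1 lines of H (or V)
  meeting a block, the first \<omega> contain two of each capacity 0 < k < \<omega> and one of capacity 0,
  and the last one has capacity 0.

  A vertical line x = m meets the P- and Q-lines of two disjoint windows of \<omega> consecutive
  intercepts, each with |h|/2 light ones.  On a horizontal line the crossings inside the block
  come from 2p + 1 resp. 2q + 1 consecutive intercepts; the light condition is \<omega>-periodic and
  symmetric about n, so the two ranges carry |h| light crossings plus the light ones among the
  end points 0 and 2p.
  P- and Q-crossings coincide exactly at the offsets 0, p, 2p, and the middle one, the only
  midpoint of a horizontal unit segment, is counted twice: the light count is exactly |h|.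
*)

section \<open>Residues modulo 2 w in (-w, w]\<close>

lemma rep2_eqI:
  assumes "-1 < v" "v \<le> 1" "t - v = 2 * of_int m"
  shows "rep2 t = v"
proof -
  have t: "(t - 1) / 2 = of_int m + (v - 1) / 2" using assms by (simp add: field_simps)
  have m: "\<lceil>of_int m + (v - 1) / 2\<rceil> = m" using assms by (intro ceiling_unique) auto
  show ?thesis unfolding rep2_def t m using assms by simp
qed

text \<open>The representative of a modulo 2 * w in (-w, w]; rep2_of_int_div relates it to rep2.\<close>

definition sym_mod :: "int \<Rightarrow> int \<Rightarrow> int" where
  "sym_mod w a = (a + w - 1) mod (2 * w) - w + 1"

lemma sym_mod_bounds: "0 < w \<Longrightarrow> -w < sym_mod w a \<and> sym_mod w a \<le> w"
  unfolding sym_mod_def using pos_mod_sign[of "2 * w" "a + w - 1"] pos_mod_bound[of "2 * w" "a + w - 1"]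
  by linarith

lemma dvd_diff_sym_mod: "2 * w dvd a - sym_mod w a"
proof -
  have "a - sym_mod w a = (a + w - 1) - (a + w - 1) mod (2 * w)" by (simp add: sym_mod_def)
  then show ?thesis by (simp add: minus_mod_eq_mult_div)
qed

lemma sym_mod_eq_iff: "sym_mod w a = sym_mod w b \<longleftrightarrow> 2 * w dvd a - b"
proof
  assume "sym_mod w a = sym_mod w b"
  then show "2 * w dvd a - b"
    using dvd_diff[OF dvd_diff_sym_mod[of w a] dvd_diff_sym_mod[of w b]] by simp
next
  assume "2 * w dvd a - b"
  then have "(a + w - 1) mod (2 * w) = (b + w - 1) mod (2 * w)" by (simp add: mod_eq_dvd_iff)
  then show "sym_mod w a = sym_mod w b" by (simp add: sym_mod_def)
qed

lemma sym_mod_eqI: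
  assumes "-w < u" "u \<le> w" "2 * w dvd a - u"
  shows "sym_mod w a = u"
proof -
  have "sym_mod w u = u" unfolding sym_mod_def using assms(1,2) by (subst mod_pos_pos_trivial) auto
  with assms(3) show ?thesis using sym_mod_eq_iff by metis
qed

lemma even_sym_mod_diff: "even (sym_mod w a - a)"
  using dvd_mult_left[OF dvd_diff_sym_mod[of w a]] by (simp add: dvd_diff_commute)

lemma rep2_of_int_div:
  assumes "0 < w"
  shows "rep2 (of_int a / of_int w) = of_int (sym_mod w a) / of_int w"
proof -
  obtain m where m: "a - sym_mod w a = 2 * w * m" using dvd_diff_sym_mod by blast
  then have "real_of_int a - of_int (sym_mod w a) = 2 * of_int w * of_int m"
    by (metis of_int_diff of_int_mult of_int_numeral)
  then have "of_int a / of_int w - of_int (sym_mod w a) / of_int w = 2 * real_of_int m"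
    using assms by (simp add: field_simps)
  moreover have "-1 < real_of_int (sym_mod w a) / of_int w" "real_of_int (sym_mod w a) / of_int w \<le> 1"
    using sym_mod_bounds[OF assms, of a] assms by (simp_all add: field_simps)
  ultimately show ?thesis by (intro rep2_eqI) auto
qed

definition parity_residues :: "int \<Rightarrow> int \<Rightarrow> int set" where
  "parity_residues w b = {v. -w < v \<and> v \<le> w \<and> even (v - b)}"

lemma finite_parity_residues: "finite (parity_residues w b)"
  by (rule finite_subset[of _ "{-w..w}"]) (auto simp: parity_residues_def)

lemma card_parity_residues_le:
  assumes "odd w" "0 < w"
  shows "card (parity_residues w b) \<le> nat w"
proof -
  let ?f = "\<lambda>j. 2 * j - w + 1 + b mod 2"
  have "parity_residues w b \<subseteq> ?f ` {0..<w}"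
  proof
    fix v assume "v \<in> parity_residues w b"
    then have "-w < v" "v \<le> w" "even (v - b)" by (auto simp: parity_residues_def)
    then have "(v + w - 1 - b mod 2) div 2 \<in> {0..<w} \<and> v = ?f ((v + w - 1 - b mod 2) div 2)"
      using assms unfolding atLeastLessThan_iff by presburger
    then show "v \<in> ?f ` {0..<w}" by blast
  qed
  then have "card (parity_residues w b) \<le> card (?f ` {0..<w})" by (intro card_mono) auto
  also have "\<dots> \<le> nat w" using card_image_le[of "{0..<w}" ?f] by simp
  finally show ?thesis .
qed

lemma bij_betw_sym_mod_affine:
  assumes "0 < w" "odd w" "coprime a w"
  shows "bij_betw (\<lambda>t. sym_mod w (b + 2 * a * t)) {c..<c + w} (parity_residues w b)"
proof -
  let ?f = "\<lambda>t. sym_mod w (b + 2 * a * t)"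
  have "t = t'" if "t \<in> {c..<c + w}" "t' \<in> {c..<c + w}" "?f t = ?f t'" for t t'
  proof -
    have "2 * w dvd 2 * (a * (t - t'))"
      using that(3) unfolding sym_mod_eq_iff by (simp add: algebra_simps)
    then have "w dvd t - t'"
      using assms(3) by (simp add: coprime_commute coprime_dvd_mult_right_iff)
    show "t = t'"
    proof (rule ccontr)
      assume "t \<noteq> t'"
      then have "\<bar>w\<bar> \<le> \<bar>t - t'\<bar>" using \<open>w dvd t - t'\<close> by (intro dvd_imp_le_int) auto
      then show False using that(1,2) by auto
    qed
  qed
  then have inj: "inj_on ?f {c..<c + w}" by (auto intro: inj_onI)
  have "?f ` {c..<c + w} \<subseteq> parity_residues w b"
  proof clarify
    fix t
    have "even (?f t - (b + 2 * a * t))" by (rule even_sym_mod_diff)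
    then have "even (?f t - b)" by (simp add: algebra_simps)
    then show "?f t \<in> parity_residues w b"
      using sym_mod_bounds[OF assms(1)] by (simp add: parity_residues_def)
  qed
  moreover have "card (?f ` {c..<c + w}) = nat w" using card_image[OF inj] by simp
  ultimately have "?f ` {c..<c + w} = parity_residues w b"
    using card_parity_residues_le[OF assms(2,1)] finite_parity_residues by (intro card_seteq) auto
  then show ?thesis using inj by (simp add: bij_betw_def)
qed

lemma card_window_sym_mod_affine:
  assumes "0 < w" "odd w" "coprime a w"
  shows "card {t \<in> {c..<c + w}. P (sym_mod w (b + 2 * a * t))} = card {v \<in> parity_residues w b. P v}"
proof -
  let ?f = "\<lambda>t. sym_mod w (b + 2 * a * t)"
  have bij: "bij_betw ?f {c..<c + w} (parity_residues w b)" by (rule bij_betw_sym_mod_affine[OF assms])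
  then have "inj_on ?f {t \<in> {c..<c + w}. P (?f t)}" by (auto simp: bij_betw_def inj_on_def)
  moreover have "?f ` {t \<in> {c..<c + w}. P (?f t)} = {v \<in> ?f ` {c..<c + w}. P v}" by blast
  ultimately have "card {t \<in> {c..<c + w}. P (?f t)} = card {v \<in> ?f ` {c..<c + w}. P v}"
    using card_image by fastforce
  then show ?thesis using bij by (simp add: bij_betw_def)
qed

section \<open>Counting residues and light values\<close>

text \<open>The light-point condition F_A F_B > 0, |F_B| < |F_A| for F_A = h / \<omega> and F_B = v / \<omega>.\<close>

definition lighter :: "int \<Rightarrow> int \<Rightarrow> bool" where
  "lighter h v \<longleftrightarrow> 0 < v * h \<and> \<bar>v\<bar> < \<bar>h\<bar>"

lemma lighter_reflect: "lighter h v \<Longrightarrow> lighter h (h - v)"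
  by (auto simp: lighter_def zero_less_mult_iff)

lemma lighter_of_int_div_iff:
  assumes "0 < w"
  shows "(0 < of_int h / of_int w * (of_int v / of_int w :: real)
      \<and> \<bar>of_int v / of_int w\<bar> < \<bar>of_int h / of_int w :: real\<bar>)
    \<longleftrightarrow> lighter h v"
proof -
  have "0 < of_int h / of_int w * (of_int v / of_int w :: real) \<longleftrightarrow> 0 < v * h"
    using assms by (simp add: zero_less_mult_iff zero_less_divide_iff mult.commute)
  moreover have "\<bar>of_int v / of_int w\<bar> < \<bar>of_int h / of_int w :: real\<bar> \<longleftrightarrow> \<bar>v\<bar> < \<bar>h\<bar>"
    using assms by (simp add: divide_less_cancel flip: of_int_abs)
  ultimately show ?thesis by (simp add: lighter_def)
qed

lemma card_odd_between:
  assumes "even h" "0 \<le> h"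
  shows "card {v::int. 0 < v \<and> v < h \<and> odd v} = nat h div 2"
proof -
  have "{v::int. 0 < v \<and> v < h \<and> odd v} = (\<lambda>j. 2 * j + 1) ` {0..<h div 2}"
  proof (intro set_eqI iffI)
    fix v assume "v \<in> {v. 0 < v \<and> v < h \<and> odd v}"
    then have "0 < v" "v < h" "odd v" by auto
    then have "v div 2 \<in> {0..<h div 2} \<and> v = 2 * (v div 2) + 1"
      using assms unfolding atLeastLessThan_iff by presburger
    then show "v \<in> (\<lambda>j. 2 * j + 1) ` {0..<h div 2}" by blast
  qed (use assms in auto)
  moreover have "card ((\<lambda>j::int. 2 * j + 1) ` {0..<h div 2}) = nat (h div 2)"
    by (subst card_image) (auto simp: inj_on_def)
  ultimately show ?thesis using assms by (simp add: nat_div_distrib)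
qed

lemma card_lighter_parity_residues:
  assumes "odd b" "even h" "\<bar>h\<bar> \<le> w"
  shows "card {v \<in> parity_residues w b. lighter h v} = nat \<bar>h\<bar> div 2"
proof -
  have lighter_iff: "v \<in> parity_residues w b \<and> lighter h v \<longleftrightarrow> lighter h v \<and> odd v" for v
    using assms by (auto simp: parity_residues_def lighter_def)
  show ?thesis
  proof (cases "0 \<le> h")
    case True
    have "lighter h v \<longleftrightarrow> 0 < v \<and> v < h" for v
      using True unfolding lighter_def zero_less_mult_iff by auto
    then have "{v \<in> parity_residues w b. lighter h v} = {v. 0 < v \<and> v < h \<and> odd v}"
      using lighter_iff by blast
    then show ?thesis using card_odd_between[OF assms(2) True] True by simp
  next
    case False
    have neg: "lighter h v \<longleftrightarrow> 0 < -v \<and> -v < -h" for v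
      using False unfolding lighter_def zero_less_mult_iff by auto
    have "{v \<in> parity_residues w b. lighter h v} = uminus ` {v. 0 < v \<and> v < -h \<and> odd v}"
    proof (intro set_eqI iffI)
      fix v assume "v \<in> {v \<in> parity_residues w b. lighter h v}"
      then have "-v \<in> {v. 0 < v \<and> v < -h \<and> odd v}" using lighter_iff[of v] neg[of v] by simp
      then show "v \<in> uminus ` {v. 0 < v \<and> v < -h \<and> odd v}" by (rule rev_image_eqI) simp
    next
      fix v assume "v \<in> uminus ` {v. 0 < v \<and> v < -h \<and> odd v}"
      then obtain u where "v = -u" "0 < u" "u < -h" "odd u" by blast
      then have "lighter h v \<and> odd v" using neg[of v] by simp
      then show "v \<in> {v \<in> parity_residues w b. lighter h v}" using lighter_iff by blast
    qed
    moreover have "card (uminus ` {v::int. 0 < v \<and> v < -h \<and> odd v}) = nat (-h) div 2"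
      using card_odd_between[of "-h"] assms(2) False by (subst card_image) (auto simp: inj_on_def)
    moreover have "\<bar>h\<bar> = -h" using False by simp
    ultimately show ?thesis by (simp only:)
  qed
qed

lemma card_abs_eq_parity_residues:
  assumes "even k" "0 \<le> k" "k < w"
  shows "card {v \<in> parity_residues w 0. \<bar>v\<bar> = k} = (if k = 0 then 1 else 2)"
proof -
  have "{v \<in> parity_residues w 0. \<bar>v\<bar> = k} = {k, -k}"
    using assms by (auto simp: parity_residues_def)
  then show ?thesis by simp
qed

lemma finite_int_interval_filter:
  "finite {t \<in> {a..b :: int}. P t}" "finite {t \<in> {a..<b :: int}. P t}"
  by (auto intro: finite_subset[of _ "{a..b}"] finite_subset[of _ "{a..<b}"])

text \<open>The reflection u \<mapsto> 2 * (p + q) - u maps {0..2 * q} onto {2 * p..2 * (p + q)}, which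
  together with {0..2 * p} covers two periods and overlaps it only in 2 * p.\<close>

lemma card_periodic_symmetric_intervals:
  fixes l :: "int \<Rightarrow> bool" and p q :: int
  assumes "0 < p" "0 < q"
    and periodic: "\<And>t m. l (t + (p + q) * m) = l t"
    and symmetric: "\<And>t. l (-t) = l t"
    and window: "\<And>c. card {t \<in> {c..<c + (p + q)}. l t} = K"
  shows "card {t \<in> {0..2 * p}. l t} + card {t \<in> {0..2 * q}. l t}
       = 2 * K + of_bool (l 0) + of_bool (l (2 * p))"
proof -
  let ?S = "\<lambda>a b. {t \<in> {a..b}. l t}"
  have single: "card {t \<in> {a}. l t} = of_bool (l a)" for a
    by (cases "l a") (simp_all add: Collect_conv_if)
  have reflect: "l (2 * p + 2 * q - u) = l u" for u
    using periodic[of "-u" 2] symmetric[of u] by (simp add: algebra_simps)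
  have "(\<lambda>u. 2 * p + 2 * q - u) ` ?S 0 (2 * q) = ?S (2 * p) (2 * p + 2 * q)"
  proof (intro set_eqI iffI)
    fix t assume "t \<in> ?S (2 * p) (2 * p + 2 * q)"
    then have "2 * p + 2 * q - t \<in> ?S 0 (2 * q)" using reflect[of "2 * p + 2 * q - t"] by auto
    then show "t \<in> (\<lambda>u. 2 * p + 2 * q - u) ` ?S 0 (2 * q)" by (rule rev_image_eqI) simp
  qed (auto simp: reflect)
  then have "card (?S 0 (2 * q)) = card (?S (2 * p) (2 * p + 2 * q))"
    by (metis (no_types, lifting) card_image inj_on_def diff_left_imp_eq)
  moreover have "card (?S 0 (2 * p)) + card (?S (2 * p) (2 * p + 2 * q))
        = card (?S 0 (2 * p + 2 * q)) + card {t \<in> {2 * p}. l t}"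
  proof -
    have "?S 0 (2 * p) \<union> ?S (2 * p) (2 * p + 2 * q) = ?S 0 (2 * p + 2 * q)"
      and "?S 0 (2 * p) \<inter> ?S (2 * p) (2 * p + 2 * q) = {t \<in> {2 * p}. l t}"
      using assms(1,2) by auto
    with card_Un_Int[OF finite_int_interval_filter(1) finite_int_interval_filter(1),
        of 0 "2 * p" l "2 * p" "2 * p + 2 * q" l] show ?thesis
      by (simp only:)
  qed
  moreover have "card (?S 0 (2 * p + 2 * q)) = 2 * K + of_bool (l 0)"
  proof -
    let ?w = "p + q"
    let ?A = "{t \<in> {0..<0 + ?w}. l t}" and ?B = "{t \<in> {?w..<?w + ?w}. l t}"
    have "?S 0 (2 * p + 2 * q) = ?A \<union> (?B \<union> {t \<in> {2 * ?w}. l t})"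
      using assms(1,2) by auto
    moreover have "card (?A \<union> (?B \<union> {t \<in> {2 * ?w}. l t})) = card ?A + (card ?B + card {t \<in> {2 * ?w}. l t})"
      using assms(1,2) finite_int_interval_filter by (subst card_Un_disjoint; auto simp: card_Un_disjoint)+
    ultimately show ?thesis using window[of 0] window[of ?w] periodic[of 0 2] single[of "2 * ?w"]
      by (simp add: mult.commute)
  qed
  ultimately show ?thesis using single[of "2 * p"] by simp
qed

lemma card_filter_three:
  fixes p :: int
  assumes "0 < p"
  shows "card {t \<in> {0, p, 2 * p}. P t} = of_bool (P 0) + of_bool (P p) + of_bool (P (2 * p))"
proof -
  have "card {t \<in> {0, p, 2 * p}. P t} = (\<Sum>t \<in> {0, p, 2 * p}. of_bool (P t))"
    by (simp add: Int_def)
  also have "\<dots> = of_bool (P 0) + of_bool (P p) + of_bool (P (2 * p))"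
    using assms by (simp del: sum_of_bool_eq)
  finally show ?thesis .
qed

section \<open>Grid lines, unit segments and crossings\<close>

lemma segment_light_points_Hline:
  assumes L: "L = {z. snd z = (of_int n :: real)}"
  shows "{z \<in> L \<inter> B. \<exists>s. (hseg s \<or> vseg s) \<and> s \<subseteq> L \<and> light_point p q s z}
       = {z \<in> L \<inter> B. light_wrt p q (F_H p q) z}"
proof (intro set_eqI iffI)
  fix z assume "z \<in> {z \<in> L \<inter> B. \<exists>s. (hseg s \<or> vseg s) \<and> s \<subseteq> L \<and> light_point p q s z}"
  then obtain s where z: "z \<in> L \<inter> B" and s: "s \<subseteq> L" "light_point p q s z" by blast
  have "\<not> vseg s"
  proof
    assume "vseg s"
    then obtain m k :: int where "s = {(of_int m, y) | y. of_int k \<le> y \<and> y \<le> of_int k + 1}"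
      by (auto simp: vseg_def)
    then have "(of_int m, of_int k) \<in> L" "(of_int m, of_int k + 1) \<in> L" using s(1) by auto
    then show False using L by simp
  qed
  then show "z \<in> {z \<in> L \<inter> B. light_wrt p q (F_H p q) z}" using z s(2) by (auto simp: light_point_def)
next
  fix z assume z: "z \<in> {z \<in> L \<inter> B. light_wrt p q (F_H p q) z}"
  define s where "s = {(x :: real, of_int n :: real) | x. of_int \<lfloor>fst z\<rfloor> \<le> x \<and> x \<le> of_int \<lfloor>fst z\<rfloor> + 1}"
  have "hseg s" unfolding s_def hseg_def by blast
  moreover have "s \<subseteq> L" unfolding s_def L by auto
  moreover have "z \<in> s"
    using z L unfolding s_def by (cases z) (auto intro: of_int_floor_le simp: add.commute[of 1] real_of_int_floor_add_one_ge)
  ultimately show "z \<in> {z \<in> L \<inter> B. \<exists>s. (hseg s \<or> vseg s) \<and> s \<subseteq> L \<and> light_point p q s z}"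
    using z by (auto simp: light_point_def)
qed

lemma segment_light_points_Vline:
  assumes L: "L = {z. fst z = (of_int m :: real)}"
  shows "{z \<in> L \<inter> B. \<exists>s. (hseg s \<or> vseg s) \<and> s \<subseteq> L \<and> light_point p q s z}
       = {z \<in> L \<inter> B. light_wrt p q (F_V p q) z}"
proof (intro set_eqI iffI)
  fix z assume "z \<in> {z \<in> L \<inter> B. \<exists>s. (hseg s \<or> vseg s) \<and> s \<subseteq> L \<and> light_point p q s z}"
  then obtain s where z: "z \<in> L \<inter> B" and s: "s \<subseteq> L" "light_point p q s z" by blast
  have "\<not> hseg s"
  proof
    assume "hseg s"
    then obtain k n :: int where "s = {(x, of_int n) | x. of_int k \<le> x \<and> x \<le> of_int k + 1}"
      by (auto simp: hseg_def)
    then have "(of_int k, of_int n) \<in> L" "(of_int k + 1, of_int n) \<in> L" using s(1) by auto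
    then show False using L by simp
  qed
  then show "z \<in> {z \<in> L \<inter> B. light_wrt p q (F_V p q) z}" using z s(2) by (auto simp: light_point_def)
next
  fix z assume z: "z \<in> {z \<in> L \<inter> B. light_wrt p q (F_V p q) z}"
  define s where "s = {(of_int m :: real, y :: real) | y. of_int \<lfloor>snd z\<rfloor> \<le> y \<and> y \<le> of_int \<lfloor>snd z\<rfloor> + 1}"
  have "vseg s" unfolding s_def vseg_def by blast
  moreover have "s \<subseteq> L" unfolding s_def L by auto
  moreover have "z \<in> s"
    using z L unfolding s_def by (cases z) (auto intro: of_int_floor_le simp: add.commute[of 1] real_of_int_floor_add_one_ge)
  ultimately show "z \<in> {z \<in> L \<inter> B. \<exists>s. (hseg s \<or> vseg s) \<and> s \<subseteq> L \<and> light_point p q s z}"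
    using z by (auto simp: light_point_def)
qed

lemma Hline_slope_crossings:
  fixes a w i n :: int
  assumes a: "0 < a" and w: "0 < w"
  defines "x0 \<equiv> of_int (i * w\<^sup>2) :: real"
  shows "{z. snd z = of_int n \<and> x0 \<le> fst z \<and> fst z \<le> x0 + of_int w \<and>
            (\<exists>c. snd z = - (2 * of_int a / of_int w) * fst z + of_int c \<and> \<Phi> c)}
       = (\<lambda>t. (x0 + of_int t * of_int w / (2 * of_int a), of_int n)) ` {t \<in> {0..2 * a}. \<Phi> (n + 2 * a * i * w + t)}"
proof -
  have on_line: "of_int n = - (2 * of_int a / of_int w) * x + of_int (n + 2 * a * i * w + t)
      \<longleftrightarrow> x = x0 + of_int t * of_int w / (2 * of_int a)" for x t
    using a w by (auto simp: x0_def field_simps power2_eq_square)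
  have in_range: "x0 \<le> x0 + of_int t * of_int w / (2 * of_int a) \<and>
      x0 + of_int t * of_int w / (2 * of_int a) \<le> x0 + of_int w \<longleftrightarrow> 0 \<le> t \<and> t \<le> 2 * a" for t
  proof -
    have "real_of_int t \<le> of_int a * 2 \<longleftrightarrow> t \<le> a * 2"
      by (metis of_int_le_iff of_int_mult of_int_numeral)
    then show ?thesis using a w by (simp add: field_simps zero_le_mult_iff)
  qed
  show ?thesis
  proof (intro set_eqI iffI)
    fix z :: "real \<times> real"
    assume "z \<in> {z. snd z = of_int n \<and> x0 \<le> fst z \<and> fst z \<le> x0 + of_int w \<and>
            (\<exists>c. snd z = - (2 * of_int a / of_int w) * fst z + of_int c \<and> \<Phi> c)}"
    then obtain c where z: "snd z = of_int n" "x0 \<le> fst z" "fst z \<le> x0 + of_int w"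
      and c: "snd z = - (2 * of_int a / of_int w) * fst z + of_int c" "\<Phi> c" by blast
    define t where "t = c - n - 2 * a * i * w"
    have "of_int n = - (2 * of_int a / of_int w) * fst z + of_int (n + 2 * a * i * w + t)"
      using z c by (simp add: t_def)
    with z c show "z \<in> (\<lambda>t. (x0 + of_int t * of_int w / (2 * of_int a), of_int n)) `
        {t \<in> {0..2 * a}. \<Phi> (n + 2 * a * i * w + t)}"
      using in_range[of t] unfolding on_line
      by (intro image_eqI[of _ _ t]) (auto simp: prod_eq_iff t_def)
  next
    fix z :: "real \<times> real"
    assume "z \<in> (\<lambda>t. (x0 + of_int t * of_int w / (2 * of_int a), of_int n)) `
        {t \<in> {0..2 * a}. \<Phi> (n + 2 * a * i * w + t)}"
    then obtain t where "z = (x0 + of_int t * of_int w / (2 * of_int a), of_int n)"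
      and t: "0 \<le> t" "t \<le> 2 * a" "\<Phi> (n + 2 * a * i * w + t)" by auto
    then have "snd z = - (2 * of_int a / of_int w) * fst z + of_int (n + 2 * a * i * w + t)"
      and "snd z = of_int n" "x0 \<le> fst z" "fst z \<le> x0 + of_int w"
      using on_line[of "fst z" t] in_range[of t] by simp_all
    with t show "z \<in> {z. snd z = of_int n \<and> x0 \<le> fst z \<and> fst z \<le> x0 + of_int w \<and>
            (\<exists>c. snd z = - (2 * of_int a / of_int w) * fst z + of_int c \<and> \<Phi> c)}"
      by blast
  qed
qed

lemma intercept_window_iff:
  fixes a w y0 m c :: int
  assumes w: "0 < w" and not_dvd: "\<not> w dvd y0 * w + 2 * a * m"
  defines "c0 \<equiv> (y0 * w + 2 * a * m) div w + 1"
  shows "(of_int y0 :: real) \<le> of_int c - 2 * of_int a * of_int m / of_int w \<and>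
      of_int c - 2 * of_int a * of_int m / of_int w \<le> (of_int y0 + of_int w :: real)
    \<longleftrightarrow> c \<in> {c0..<c0 + w}"
proof -
  define r where "r = (y0 * w + 2 * a * m) mod w"
  have "r \<noteq> 0" using not_dvd by (simp add: r_def dvd_eq_mod_eq_0)
  moreover have "0 \<le> r" "r < w" using w by (simp_all add: r_def)
  ultimately have r: "0 < r" "r < w" by simp_all
  have N: "y0 * w + 2 * a * m = (c0 - 1) * w + r"
    unfolding c0_def r_def by (metis add_diff_cancel_right' div_mult_mod_eq)
  have "(of_int y0 :: real) \<le> of_int c - 2 * of_int a * of_int m / of_int w \<and>
      of_int c - 2 * of_int a * of_int m / of_int w \<le> (of_int y0 + of_int w :: real)
    \<longleftrightarrow> real_of_int (y0 * w + 2 * a * m) \<le> of_int (c * w) \<and>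
        real_of_int (c * w) \<le> of_int (y0 * w + 2 * a * m + w * w)"
    using w by (simp add: field_simps)
  also have "\<dots> \<longleftrightarrow> y0 * w + 2 * a * m \<le> c * w \<and> c * w \<le> y0 * w + 2 * a * m + w * w"
    by (simp only: of_int_le_iff)
  also have "\<dots> \<longleftrightarrow> c \<in> {c0..<c0 + w}"
    unfolding N
  proof
    assume "(c0 - 1) * w + r \<le> c * w \<and> c * w \<le> (c0 - 1) * w + r + w * w"
    then have "(c0 - 1) * w < c * w" "c * w < (c0 + w) * w" using r by (auto simp: algebra_simps)
    then show "c \<in> {c0..<c0 + w}" using w by (simp add: mult_less_cancel_right)
  next
    assume "c \<in> {c0..<c0 + w}"
    then have "c0 * w \<le> c * w" "(c + 1) * w \<le> (c0 + w) * w" using w by (simp_all add: mult_right_mono)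
    moreover have "(c0 - 1) * w = c0 * w - w" "(c + 1) * w = c * w + w" "(c0 + w) * w = c0 * w + w * w"
      by (simp_all add: algebra_simps)
    ultimately show "(c0 - 1) * w + r \<le> c * w \<and> c * w \<le> (c0 - 1) * w + r + w * w"
      using r by linarith
  qed
  finally show ?thesis .
qed

lemma Vline_slope_crossings:
  fixes a w y0 m :: int
  assumes w: "0 < w" and not_dvd: "\<not> w dvd y0 * w + 2 * a * m"
  defines "c0 \<equiv> (y0 * w + 2 * a * m) div w + 1"
  shows "{z :: real \<times> real. fst z = of_int m \<and> of_int y0 \<le> snd z \<and> snd z \<le> of_int y0 + of_int w \<and>
            (\<exists>c. snd z = - (2 * of_int a / of_int w) * fst z + of_int c \<and> \<Phi> c)}
       = (\<lambda>c. (of_int m, of_int c - 2 * of_int a * of_int m / of_int w)) ` {c \<in> {c0..<c0 + w}. \<Phi> c}"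
proof (intro set_eqI iffI)
  fix z :: "real \<times> real"
  assume "z \<in> {z. fst z = of_int m \<and> of_int y0 \<le> snd z \<and> snd z \<le> of_int y0 + of_int w \<and>
          (\<exists>c. snd z = - (2 * of_int a / of_int w) * fst z + of_int c \<and> \<Phi> c)}"
  then obtain c where "z = (of_int m, of_int c - 2 * of_int a * of_int m / of_int w)"
    "of_int y0 \<le> snd z" "snd z \<le> of_int y0 + of_int w" "\<Phi> c" by (auto simp: prod_eq_iff)
  then show "z \<in> (\<lambda>c. (of_int m, of_int c - 2 * of_int a * of_int m / of_int w)) ` {c \<in> {c0..<c0 + w}. \<Phi> c}"
    using intercept_window_iff[OF w not_dvd, of c, folded c0_def] by auto
next
  fix z :: "real \<times> real"
  assume "z \<in> (\<lambda>c. (of_int m, of_int c - 2 * of_int a * of_int m / of_int w)) ` {c \<in> {c0..<c0 + w}. \<Phi> c}"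
  then obtain c where "z = (of_int m, of_int c - 2 * of_int a * of_int m / of_int w)"
    "c \<in> {c0..<c0 + w}" "\<Phi> c" by auto
  then show "z \<in> {z. fst z = of_int m \<and> of_int y0 \<le> snd z \<and> snd z \<le> of_int y0 + of_int w \<and>
          (\<exists>c. snd z = - (2 * of_int a / of_int w) * fst z + of_int c \<and> \<Phi> c)}"
    using intercept_window_iff[OF w not_dvd, of c, folded c0_def] by auto
qed

lemma scaled_offsets_eq_iff:
  fixes a b w t u :: int and x0 :: real
  assumes "0 < a" "0 < b" "0 < w"
  shows "(x0 + of_int t * of_int w / (2 * of_int a) = x0 + of_int u * of_int w / (2 * of_int b))
    \<longleftrightarrow> t * b = u * a"
proof -
  have "(x0 + of_int t * of_int w / (2 * of_int a) = x0 + of_int u * of_int w / (2 * of_int b))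
      \<longleftrightarrow> real_of_int (t * b) = of_int (u * a)"
    using assms by (simp add: field_simps)
  then show ?thesis by (simp only: of_int_eq_iff)
qed

lemma coprime_cross_multiples:
  fixes p q t u :: int
  assumes "coprime p q" "0 < p" "0 < q" "t * q = u * p" "0 \<le> t" "t \<le> 2 * p"
  obtains e where "e \<in> {0, 1, 2}" "t = p * e" "u = q * e"
proof -
  have "p dvd t * q" using assms(4) by simp
  then obtain e where t: "t = p * e" using assms(1) by (auto simp: coprime_dvd_mult_left_iff)
  then have "u = q * e" using assms(2,4) by (simp add: algebra_simps)
  moreover have "0 \<le> e" "e \<le> 2" using assms(2,5,6) t by (auto simp: zero_le_mult_iff)
  then have "e \<in> {0, 1, 2}" by auto
  ultimately show ?thesis using t that by blast
qed

lemma hmidpoint_scaled_offset_iff: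
  fixes a w x0 t n :: int
  assumes "0 < a" "odd w" "coprime a w" "0 \<le> t" "t \<le> 2 * a"
  shows "hmidpoint (of_int x0 + of_int t * of_int w / (2 * of_int a), of_int n) \<longleftrightarrow> t = a"
proof
  assume "hmidpoint (of_int x0 + of_int t * of_int w / (2 * of_int a), of_int n)"
  then obtain m where "of_int x0 + of_int t * of_int w / (2 * of_int a) = (of_int m + 1 / 2 :: real)"
    unfolding hmidpoint_def by auto
  then have "real_of_int (t * w) = of_int (a * (2 * (m - x0) + 1))"
    using assms(1) by (simp add: field_simps)
  then have tw: "t * w = a * (2 * (m - x0) + 1)" by (simp only: of_int_eq_iff)
  then have "a dvd t * w" by simp
  then obtain e where t: "t = a * e" using assms(3) by (auto simp: coprime_dvd_mult_left_iff)
  then have "a * (e * w) = a * (2 * (m - x0) + 1)" using tw by (simp add: algebra_simps)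
  then have "e * w = 2 * (m - x0) + 1" using assms(1) by simp
  then have "odd e" by (metis even_add even_mult_iff odd_one dvd_triv_left)
  moreover have "0 \<le> e" "e \<le> 2" using assms(1,4,5) t by (auto simp: zero_le_mult_iff)
  ultimately have "e = 1" by presburger
  then show "t = a" using t by simp
next
  assume "t = a"
  obtain r where "w = 2 * r + 1" using assms(2) by (metis oddE)
  then have "(of_int x0 + of_int t * of_int w / (2 * of_int a), of_int n)
      = (of_int (x0 + r) + 1 / 2 :: real, of_int n :: real)"
    using \<open>t = a\<close> assms(1) by (simp add: field_simps)
  then show "hmidpoint (of_int x0 + of_int t * of_int w / (2 * of_int a), of_int n)"
    unfolding hmidpoint_def by blast
qed

lemma not_hmidpoint_Vline:
  assumes "fst z = of_int m"
  shows "\<not> hmidpoint z"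
proof
  assume "hmidpoint z"
  then obtain k n :: int where "z = (of_int k + 1 / 2, of_int n)" unfolding hmidpoint_def by blast
  then have "of_int m = (of_int k + 1 / 2 :: real)" using assms by simp
  then have "of_int (2 * m) = (of_int (2 * k + 1) :: real)" by simp
  then show False by presburger
qed

lemma inj_Hline: "inj (\<lambda>n::int. {z :: real \<times> real. snd z = of_int n})"
  by (rule injI) (metis (mono_tags) mem_Collect_eq of_int_eq_iff snd_conv)

lemma inj_Vline: "inj (\<lambda>n::int. {z :: real \<times> real. fst z = of_int n})"
  by (rule injI) (metis (mono_tags) mem_Collect_eq of_int_eq_iff fst_conv)

lemma Vline_notin_Hlines: "{z :: real \<times> real. fst z = of_int m} \<notin> Hlines"
proof
  assume "{z :: real \<times> real. fst z = of_int m} \<in> Hlines"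
  then obtain n where "{z :: real \<times> real. fst z = of_int m} = {z. snd z = of_int n}"
    by (auto simp: Hlines_def)
  moreover have "(of_int m, of_int n + 1) \<in> {z :: real \<times> real. fst z = of_int m}" by simp
  ultimately show False by simp
qed

lemma Collect_Hlines: "{L \<in> Hlines. P L} = (\<lambda>n. {z. snd z = of_int n}) ` {n. P {z. snd z = of_int n}}"
  and Collect_Vlines: "{L \<in> Vlines. P L} = (\<lambda>n. {z. fst z = of_int n}) ` {n. P {z. fst z = of_int n}}"
  by (auto simp: Hlines_def Vlines_def)

lemma Hline_meets_square_iff:
  fixes x0 x1 y0 y1 y :: real
  shows "{z. snd z = y} \<inter> ({x0..x1} \<times> {y0..y1}) \<noteq> {} \<longleftrightarrow> x0 \<le> x1 \<and> y0 \<le> y \<and> y \<le> y1"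
proof
  assume "x0 \<le> x1 \<and> y0 \<le> y \<and> y \<le> y1"
  then have "(x0, y) \<in> {z. snd z = y} \<inter> ({x0..x1} \<times> {y0..y1})" by simp
  then show "{z. snd z = y} \<inter> ({x0..x1} \<times> {y0..y1}) \<noteq> {}" by blast
qed auto

lemma Vline_meets_square_iff:
  fixes x0 x1 y0 y1 x :: real
  shows "{z. fst z = x} \<inter> ({x0..x1} \<times> {y0..y1}) \<noteq> {} \<longleftrightarrow> y0 \<le> y1 \<and> x0 \<le> x \<and> x \<le> x1"
proof
  assume "y0 \<le> y1 \<and> x0 \<le> x \<and> x \<le> x1"
  then have "(x, y0) \<in> {z. fst z = x} \<inter> ({x0..x1} \<times> {y0..y1})" by simp
  then show "{z. fst z = x} \<inter> ({x0..x1} \<times> {y0..y1}) \<noteq> {}" by blast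
qed auto

section \<open>An even rational parameter\<close>

locale even_param =
  fixes p q :: nat
  assumes even_rat_param: "even_rat_param p q"
begin

abbreviation \<omega> :: int where "\<omega> \<equiv> int p + int q"

lemma p_pos: "0 < int p" and q_pos: "0 < int q" and omega_pos: "0 < \<omega>"
  using even_rat_param by (auto simp: even_rat_param_def)

lemma coprime_p_q: "coprime (int p) (int q)"
  using even_rat_param by (simp add: even_rat_param_def)

lemma coprime_p_omega: "coprime (int p) \<omega>"
  using coprime_p_q by (simp add: coprime_iff_gcd_eq_1)

lemma coprime_q_omega: "coprime (int q) \<omega>"
  using coprime_p_q by (metis add.commute coprime_commute coprime_iff_gcd_eq_1 gcd_add2)

lemma odd_omega: "odd \<omega>"
proof -
  have "\<not> (even p \<and> even q)"
    using even_rat_param by (auto simp: even_rat_param_def intro: coprime_common_divisor_nat[of p q 2])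
  moreover have "even p \<or> even q" using even_rat_param by (auto simp: even_rat_param_def)
  ultimately show ?thesis by auto
qed

lemma coprime_2_omega: "coprime 2 \<omega>"
  using odd_omega by (simp add: coprime_commute)

lemma coprime_2p_omega: "coprime (2 * int p) \<omega>"
  using coprime_2_omega coprime_p_omega by simp

lemma real_omega: "real (omega p q) = of_int \<omega>"
  by (simp add: omega_def)

lemma bigP_eq: "bigP p q = 2 * of_int (int p) / of_int \<omega>"
  and bigQ_eq: "bigQ p q = 2 * of_int (int q) / of_int \<omega>"
  by (simp_all add: bigP_def bigQ_def omega_def)

text \<open>\<omega> times the value of F_H on the line y = n, and of F_V on the line x = n.\<close>

definition signed_capacity :: "int \<Rightarrow> int" where
  "signed_capacity n = sym_mod \<omega> (4 * int p * n)"

lemma signed_capacity_bounds: "-\<omega> < signed_capacity n \<and> signed_capacity n \<le> \<omega>"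
  unfolding signed_capacity_def by (rule sym_mod_bounds[OF omega_pos])

lemma even_signed_capacity: "even (signed_capacity n)"
  using even_sym_mod_diff[of \<omega> "4 * int p * n"] unfolding signed_capacity_def by simp

lemma F_H_eq: "snd z = of_int n \<Longrightarrow> F_H p q z = of_int (signed_capacity n) / of_int \<omega>"
  and F_V_eq: "fst z = of_int n \<Longrightarrow> F_V p q z = of_int (signed_capacity n) / of_int \<omega>"
  using rep2_of_int_div[OF omega_pos, of "4 * int p * n"]
  by (simp_all add: F_H_def F_V_def signed_capacity_def bigP_eq field_simps)

lemma F_P_eq:
  assumes "snd z = - bigP p q * fst z + of_int c"
  shows "F_P p q z = of_int (sym_mod \<omega> (\<omega> + 2 * int p * c)) / of_int \<omega>"
proof -
  have "bigP p q * snd z + (bigP p q)\<^sup>2 * fst z + 1 = bigP p q * (snd z + bigP p q * fst z) + 1"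
    by (simp add: power2_eq_square algebra_simps)
  also have "\<dots> = bigP p q * of_int c + 1"
    using assms by simp
  also have "\<dots> = of_int (\<omega> + 2 * int p * c) / of_int \<omega>"
    using omega_pos by (simp add: bigP_eq field_simps)
  finally show ?thesis unfolding F_P_def by (simp only: rep2_of_int_div[OF omega_pos])
qed

lemma F_Q_eq:
  assumes "snd z = - bigQ p q * fst z + of_int c"
  shows "F_Q p q z = of_int (sym_mod \<omega> (\<omega> + 2 * int p * c)) / of_int \<omega>"
proof -
  have "bigP p q * snd z + bigP p q * bigQ p q * fst z + 1 = bigP p q * (snd z + bigQ p q * fst z) + 1"
    by (simp add: algebra_simps)
  also have "\<dots> = bigP p q * of_int c + 1"
    using assms by simp
  also have "\<dots> = of_int (\<omega> + 2 * int p * c) / of_int \<omega>"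
    using omega_pos by (simp add: bigP_eq field_simps)
  finally show ?thesis unfolding F_Q_def by (simp only: rep2_of_int_div[OF omega_pos])
qed

lemma mem_Union_Plines: "z \<in> \<Union>(Plines p q) \<longleftrightarrow> (\<exists>c. snd z = - bigP p q * fst z + of_int c)"
  and mem_Union_Qlines: "z \<in> \<Union>(Qlines p q) \<longleftrightarrow> (\<exists>c. snd z = - bigQ p q * fst z + of_int c)"
  by (auto simp: Plines_def Qlines_def)

text \<open>By F_P_eq and F_Q_eq, a point on the P- or Q-line with intercept c is light on a line of
  H or V with signed capacity h exactly when light_intercept h c.\<close>

definition light_intercept :: "int \<Rightarrow> int \<Rightarrow> bool" where
  "light_intercept h c \<longleftrightarrow> lighter h (sym_mod \<omega> (\<omega> + 2 * int p * c))"

lemma light_wrt_iff: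
  assumes "FA z = of_int h / of_int \<omega>"
  shows "light_wrt p q FA z \<longleftrightarrow>
    (\<exists>c. snd z = - bigP p q * fst z + of_int c \<and> light_intercept h c) \<or>
    (\<exists>c. snd z = - bigQ p q * fst z + of_int c \<and> light_intercept h c)"
proof -
  have light_iff: "0 < FA z * (of_int v / of_int \<omega>) \<and> \<bar>of_int v / of_int \<omega>\<bar> < \<bar>FA z\<bar> \<longleftrightarrow> lighter h v"
    for v using lighter_of_int_div_iff[OF omega_pos] assms by simp
  show ?thesis
    unfolding light_wrt_def mem_Union_Plines mem_Union_Qlines light_intercept_def
    using F_P_eq F_Q_eq light_iff by metis
qed

lemma light_intercept_periodic: "light_intercept h (c + \<omega> * m) = light_intercept h c"
proof -
  have "2 * \<omega> dvd (\<omega> + 2 * int p * (c + \<omega> * m)) - (\<omega> + 2 * int p * c)"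
    by (rule dvdI[of _ _ "int p * m"]) (simp add: algebra_simps)
  then show ?thesis unfolding light_intercept_def sym_mod_eq_iff[symmetric] by simp
qed

text \<open>The intercepts n + t and n - t give values whose sum is congruent to signed_capacity n
  modulo 2 * \<omega>, and lighter h is preserved by v \<mapsto> h - v.\<close>

lemma light_intercept_reflect:
  "light_intercept (signed_capacity n) (n - t) = light_intercept (signed_capacity n) (n + t)"
proof -
  have *: "light_intercept (signed_capacity n) (n - t)"
    if "light_intercept (signed_capacity n) (n + t)" for t
  proof -
    let ?h = "signed_capacity n" and ?v = "sym_mod \<omega> (\<omega> + 2 * int p * (n + t))"
    have l: "lighter ?h ?v" using that by (simp add: light_intercept_def)
    have "sym_mod \<omega> (\<omega> + 2 * int p * (n - t)) = ?h - ?v"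
    proof (rule sym_mod_eqI)
      show "-\<omega> < ?h - ?v" "?h - ?v \<le> \<omega>"
        using l signed_capacity_bounds[of n] by (auto simp: lighter_def zero_less_mult_iff)
      have "2 * \<omega> dvd (4 * int p * n - ?h) - ((\<omega> + 2 * int p * (n + t)) - ?v) + 2 * \<omega>"
        unfolding signed_capacity_def by (intro dvd_add dvd_diff dvd_diff_sym_mod) simp
      also have "(4 * int p * n - ?h) - ((\<omega> + 2 * int p * (n + t)) - ?v) + 2 * \<omega>
          = \<omega> + 2 * int p * (n - t) - (?h - ?v)"
        by (simp add: algebra_simps)
      finally show "2 * \<omega> dvd \<omega> + 2 * int p * (n - t) - (?h - ?v)" .
    qed
    then show ?thesis using lighter_reflect[OF l] by (simp add: light_intercept_def)
  qed
  show ?thesis using *[of t] *[of "-t"] by auto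
qed

lemma card_light_intercept_window:
  "card {t \<in> {c..<c + \<omega>}. light_intercept (signed_capacity m) (n + t)}
    = nat \<bar>signed_capacity m\<bar> div 2"
proof -
  have "card {t \<in> {c..<c + \<omega>}. light_intercept (signed_capacity m) (n + t)}
      = card {v \<in> parity_residues \<omega> (\<omega> + 2 * int p * n). lighter (signed_capacity m) v}"
    using card_window_sym_mod_affine[OF omega_pos odd_omega coprime_p_omega,
        of c "lighter (signed_capacity m)" "\<omega> + 2 * int p * n"]
    by (simp add: light_intercept_def algebra_simps)
  also have "\<dots> = nat \<bar>signed_capacity m\<bar> div 2"
    using odd_omega even_signed_capacity signed_capacity_bounds[of m]
    by (intro card_lighter_parity_residues) auto
  finally show ?thesis .
qed

abbreviation omega_square :: "int \<Rightarrow> int \<Rightarrow> (real \<times> real) set" where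
  "omega_square x0 y0 \<equiv> {of_int x0..of_int x0 + of_int \<omega>} \<times> {of_int y0..of_int y0 + of_int \<omega>}"

lemma block_cases:
  assumes "B \<in> blocks p q"
  obtains i j :: int where
    "B = omega_square (i * \<omega>\<^sup>2) (j * \<omega>)"
proof -
  obtain i j :: int where "B = {(x, y). real_of_int (i * int (omega p q)^2) \<le> x \<and>
      x \<le> real_of_int (i * int (omega p q)^2) + real (omega p q) \<and>
      real_of_int (j * int (omega p q)) \<le> y \<and> y \<le> real_of_int (j * int (omega p q)) + real (omega p q)}"
    using assms by (auto simp: blocks_def)
  then show ?thesis
    by (intro that[of i j]) (auto simp: omega_def simp del: of_int_add of_int_mult of_int_power)
qed

lemma capacity_Hline: "capacity p q {z. snd z = of_int n} = \<bar>of_int (signed_capacity n)\<bar>"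
proof -
  let ?z = "SOME z. z \<in> {z :: real \<times> real. snd z = of_int n}"
  have "?z \<in> {z. snd z = of_int n}" by (rule someI[of _ "(0, of_int n)"]) simp
  then have "F_H p q ?z = of_int (signed_capacity n) / of_int \<omega>" by (simp add: F_H_eq)
  then show ?thesis using omega_pos by (auto simp: capacity_def Hlines_def real_omega)
qed

lemma capacity_Vline: "capacity p q {z. fst z = of_int n} = \<bar>of_int (signed_capacity n)\<bar>"
proof -
  let ?z = "SOME z. z \<in> {z :: real \<times> real. fst z = of_int n}"
  have "?z \<in> {z. fst z = of_int n}" by (rule someI[of _ "(of_int n, 0)"]) simp
  then have "F_V p q ?z = of_int (signed_capacity n) / of_int \<omega>" by (simp add: F_V_eq)
  then show ?thesis using omega_pos Vline_notin_Hlines by (simp add: capacity_def real_omega)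
qed

lemma capacity_eq_iff: "\<bar>of_int (signed_capacity n)\<bar> = real k \<longleftrightarrow> \<bar>signed_capacity n\<bar> = int k"
  by (metis of_int_abs of_int_eq_iff of_int_of_nat_eq)

lemma signed_capacity_multiple: "signed_capacity (\<omega> * r) = 0"
proof -
  have "2 * \<omega> dvd 4 * int p * (\<omega> * r) - 0"
    by (rule dvdI[of _ _ "2 * int p * r"]) (simp add: algebra_simps)
  then show ?thesis unfolding signed_capacity_def using omega_pos by (intro sym_mod_eqI) auto
qed

lemma card_capacity_window:
  assumes "even k" "int k \<le> \<omega>"
  shows "card {n \<in> {j * \<omega>..j * \<omega> + \<omega>}. \<bar>signed_capacity n\<bar> = int k} = 2"
proof -
  let ?P = "\<lambda>n. \<bar>signed_capacity n\<bar> = int k"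
  have "int k \<noteq> \<omega>" using assms(1) odd_omega by (metis even_of_nat)
  then have k: "int k < \<omega>" using assms(2) by simp
  have "card {n \<in> {j * \<omega>..<j * \<omega> + \<omega>}. ?P n} = card {v \<in> parity_residues \<omega> 0. \<bar>v\<bar> = int k}"
    using card_window_sym_mod_affine[OF omega_pos odd_omega coprime_2p_omega, of "j * \<omega>" _ 0]
    by (simp add: signed_capacity_def mult.assoc)
  also have "\<dots> = (if k = 0 then 1 else 2)"
    using card_abs_eq_parity_residues[of "int k"] assms(1) k by simp
  finally have "card {n \<in> {j * \<omega>..<j * \<omega> + \<omega>}. ?P n} = (if k = 0 then 1 else 2)" .
  moreover have "?P (j * \<omega> + \<omega>) \<longleftrightarrow> k = 0"
    using signed_capacity_multiple[of "j + 1"] by (simp add: algebra_simps)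
  moreover have "card {n \<in> {j * \<omega>..j * \<omega> + \<omega>}. ?P n}
      = card {n \<in> {j * \<omega>..<j * \<omega> + \<omega>}. ?P n} + card {n \<in> {j * \<omega> + \<omega>}. ?P n}"
  proof -
    have "{n \<in> {j * \<omega>..j * \<omega> + \<omega>}. ?P n}
        = {n \<in> {j * \<omega>..<j * \<omega> + \<omega>}. ?P n} \<union> {n \<in> {j * \<omega> + \<omega>}. ?P n}"
      using omega_pos by auto
    moreover have "finite {n \<in> {j * \<omega> + \<omega>}. ?P n}" by simp
    ultimately show ?thesis
      by (simp only:) (rule card_Un_disjoint[OF finite_int_interval_filter(2)]; auto)
  qed
  ultimately show ?thesis by (cases "k = 0") (simp_all add: Collect_conv_if)
qed

lemma Hlines_capacity_in_square:
  "{L \<in> Hlines. capacity p q L = real k \<and>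
      L \<inter> omega_square X0 Y0 \<noteq> {}}
    = (\<lambda>n. {z. snd z = of_int n}) ` {n \<in> {Y0..Y0 + \<omega>}. \<bar>signed_capacity n\<bar> = int k}"
  unfolding Collect_Hlines capacity_Hline capacity_eq_iff Hline_meets_square_iff
  using omega_pos by (auto simp flip: of_int_add simp del: of_int_add)

lemma Vlines_capacity_in_square:
  "{L \<in> Vlines. capacity p q L = real k \<and>
      L \<inter> omega_square X0 Y0 \<noteq> {}}
    = (\<lambda>n. {z. fst z = of_int n}) ` {n \<in> {X0..X0 + \<omega>}. \<bar>signed_capacity n\<bar> = int k}"
  unfolding Collect_Vlines capacity_Vline capacity_eq_iff Vline_meets_square_iff
  using omega_pos by (auto simp flip: of_int_add simp del: of_int_add)

end

section \<open>Light points on a horizontal line\<close>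

locale Hline_in_block = even_param +
  fixes i n :: int
begin

definition light_offset :: "int \<Rightarrow> bool" where
  "light_offset t \<longleftrightarrow> light_intercept (signed_capacity n) (n + t)"

abbreviation light_offsets :: "int \<Rightarrow> int set" where
  "light_offsets a \<equiv> {t \<in> {0..2 * a}. light_offset t}"

text \<open>crossing a t is where y = n meets the line of slope -2 * a / \<omega> with intercept
  n + 2 * a * i * \<omega> + t; inside the block, 0 \<le> t \<le> 2 * a.\<close>

definition crossing :: "int \<Rightarrow> int \<Rightarrow> real \<times> real" where
  "crossing a t = (of_int (i * \<omega>\<^sup>2) + of_int t * of_int \<omega> / (2 * of_int a), of_int n)"

lemma light_points:
  assumes "Y0 \<le> n" "n \<le> Y0 + \<omega>"
  shows "{z \<in> {z. snd z = of_int n} \<inter> omega_square (i * \<omega>\<^sup>2) Y0. light_wrt p q (F_H p q) z}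
    = crossing (int p) ` light_offsets (int p) \<union> crossing (int q) ` light_offsets (int q)"
proof -
  let ?h = "signed_capacity n" and ?x0 = "of_int (i * \<omega>\<^sup>2) :: real"
  have crossings: "{z. snd z = of_int n \<and> ?x0 \<le> fst z \<and> fst z \<le> ?x0 + of_int \<omega> \<and>
        (\<exists>c. snd z = - (2 * of_int a / of_int \<omega>) * fst z + of_int c \<and> light_intercept ?h c)}
      = crossing a ` light_offsets a" if "0 < a" for a
  proof -
    have "light_intercept ?h (n + 2 * a * i * \<omega> + t) = light_offset t" for t
      using light_intercept_periodic[of ?h "n + t" "2 * a * i"] by (simp add: light_offset_def algebra_simps)
    then show ?thesis
      using Hline_slope_crossings[OF that omega_pos, of n i "light_intercept ?h"]
      by (simp add: crossing_def[abs_def])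
  qed
  have "{z \<in> {z. snd z = of_int n} \<inter> omega_square (i * \<omega>\<^sup>2) Y0. light_wrt p q (F_H p q) z}
    = {z. snd z = of_int n \<and> ?x0 \<le> fst z \<and> fst z \<le> ?x0 + of_int \<omega> \<and>
        (\<exists>c. snd z = - (2 * of_int (int p) / of_int \<omega>) * fst z + of_int c \<and> light_intercept ?h c)}
    \<union> {z. snd z = of_int n \<and> ?x0 \<le> fst z \<and> fst z \<le> ?x0 + of_int \<omega> \<and>
        (\<exists>c. snd z = - (2 * of_int (int q) / of_int \<omega>) * fst z + of_int c \<and> light_intercept ?h c)}"
    using assms light_wrt_iff[OF F_H_eq[where n = n]] by (auto simp: mem_Times_iff bigP_eq bigQ_eq)
  then show ?thesis unfolding crossings[OF p_pos] crossings[OF q_pos] .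
qed

lemma card_light_offsets:
  "card (light_offsets (int p)) + card (light_offsets (int q))
    = nat \<bar>signed_capacity n\<bar> + of_bool (light_offset 0) + of_bool (light_offset (2 * int p))"
proof -
  have "card (light_offsets (int p)) + card (light_offsets (int q))
      = 2 * (nat \<bar>signed_capacity n\<bar> div 2) + of_bool (light_offset 0) + of_bool (light_offset (2 * int p))"
  proof (rule card_periodic_symmetric_intervals[OF p_pos q_pos])
    show "light_offset (t + \<omega> * m) = light_offset t" for t m
      using light_intercept_periodic[of _ "n + t" m] by (simp add: light_offset_def add.assoc)
    show "light_offset (- t) = light_offset t" for t
      using light_intercept_reflect[of n t] by (simp add: light_offset_def)
    show "card {t \<in> {c..<c + \<omega>}. light_offset t} = nat \<bar>signed_capacity n\<bar> div 2" for c
      using card_light_intercept_window[of c n n] by (simp add: light_offset_def)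
  qed
  moreover have "2 * (nat \<bar>signed_capacity n\<bar> div 2) = nat \<bar>signed_capacity n\<bar>"
    using even_signed_capacity[of n] by (auto simp: nat_abs_mult_distrib elim!: evenE)
  ultimately show ?thesis by simp
qed

lemma crossing_eq_iff: "0 < a \<Longrightarrow> 0 < b \<Longrightarrow> crossing a t = crossing b u \<longleftrightarrow> t * b = u * a"
  unfolding crossing_def prod.inject by (simp only: scaled_offsets_eq_iff[OF _ _ omega_pos] simp_thms)

lemma inj_crossing: "0 < a \<Longrightarrow> inj (crossing a)"
  by (rule injI) (simp add: crossing_eq_iff)

lemma crossings_inter:
  "crossing (int p) ` light_offsets (int p) \<inter> crossing (int q) ` light_offsets (int q)
    = crossing (int p) ` {t \<in> {0, int p, 2 * int p}. light_offset t}"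
proof (intro set_eqI iffI)
  fix z assume "z \<in> crossing (int p) ` light_offsets (int p) \<inter> crossing (int q) ` light_offsets (int q)"
  then obtain t u where t: "t \<in> {0..2 * int p}" "light_offset t" "z = crossing (int p) t"
    and "z = crossing (int q) u" by blast
  then have "t * int q = u * int p"
    using crossing_eq_iff[OF p_pos q_pos, of t u] by simp
  then obtain e where "e \<in> {0, 1, 2}" "t = int p * e"
    using coprime_cross_multiples[OF coprime_p_q p_pos q_pos] t(1) by (metis atLeastAtMost_iff)
  then show "z \<in> crossing (int p) ` {t \<in> {0, int p, 2 * int p}. light_offset t}" using t by auto
next
  fix z assume "z \<in> crossing (int p) ` {t \<in> {0, int p, 2 * int p}. light_offset t}"
  then obtain t where t: "t \<in> {0, int p, 2 * int p}" "light_offset t" "z = crossing (int p) t"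
    by blast
  then have "t = int p * 0 \<or> t = int p * 1 \<or> t = int p * 2" by auto
  then obtain e where e: "e \<in> {0, 1, 2}" "t = int p * e" "light_offset t" "z = crossing (int p) t"
    using t by blast
  have "light_offset (int q * e) = light_offset (- (int p * e) + \<omega> * e)"
    by (simp add: algebra_simps)
  also have "\<dots> = light_offset (int p * e)"
    using light_intercept_periodic[of _ "n - int p * e" e] light_intercept_reflect[of n "int p * e"]
    by (simp add: light_offset_def algebra_simps)
  finally have "light_offset (int q * e)" using e by simp
  moreover have "crossing (int q) (int q * e) = z"
    using e(2,4) p_pos q_pos by (simp add: crossing_def)
  moreover have "t \<in> light_offsets (int p)" "int q * e \<in> {0..2 * int q}"
    using e p_pos q_pos by auto
  ultimately show "z \<in> crossing (int p) ` light_offsets (int p) \<inter> crossing (int q) ` light_offsets (int q)"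
    using e(4) by (metis (no_types, lifting) IntI mem_Collect_eq rev_image_eqI)
qed

lemma crossings_midpoints:
  "{z \<in> crossing (int p) ` light_offsets (int p) \<union> crossing (int q) ` light_offsets (int q). hmidpoint z}
    = crossing (int p) ` {t \<in> {int p}. light_offset t}"
proof -
  have mid: "hmidpoint (crossing a t) \<longleftrightarrow> t = a" if "0 < a" "coprime a \<omega>" "t \<in> {0..2 * a}" for a t
    unfolding crossing_def using that(3) by (intro hmidpoint_scaled_offset_iff[OF that(1) odd_omega that(2)]) auto
  have "crossing (int q) (int q) = crossing (int p) (int p)"
    using p_pos q_pos by (simp add: crossing_def)
  moreover have "light_offset (int q) = light_offset (int p)"
    using light_intercept_periodic[of _ "n - int p" 1] light_intercept_reflect[of n "int p"]
    by (simp add: light_offset_def algebra_simps)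
  ultimately show ?thesis
    using mid[OF p_pos coprime_p_omega] mid[OF q_pos coprime_q_omega] p_pos by auto
qed

lemma light_count_eq:
  assumes "Y0 \<le> n" "n \<le> Y0 + \<omega>"
  shows "light_count p q {z. snd z = of_int n} (omega_square (i * \<omega>\<^sup>2) Y0) = nat \<bar>signed_capacity n\<bar>"
proof -
  let ?l = "\<lambda>t. of_bool (light_offset t) :: nat"
  let ?A = "crossing (int p) ` light_offsets (int p)" and ?B = "crossing (int q) ` light_offsets (int q)"
  have "light_count p q {z. snd z = of_int n} (omega_square (i * \<omega>\<^sup>2) Y0)
      = card (?A \<union> ?B) + card {z \<in> ?A \<union> ?B. hmidpoint z}"
    unfolding light_count_def Let_def segment_light_points_Hline[OF refl] light_points[OF assms] ..
  moreover have "card (?A \<union> ?B) + card (?A \<inter> ?B) = card ?A + card ?B"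
    by (rule card_Un_Int[symmetric]) (intro finite_imageI finite_int_interval_filter)+
  moreover have "card ?A + card ?B = nat \<bar>signed_capacity n\<bar> + ?l 0 + ?l (2 * int p)"
    using card_light_offsets inj_crossing[OF p_pos] inj_crossing[OF q_pos]
    by (simp add: card_image inj_on_subset)
  moreover have "card (?A \<inter> ?B) = ?l 0 + ?l (int p) + ?l (2 * int p)"
    unfolding crossings_inter using card_filter_three[OF p_pos] inj_crossing[OF p_pos]
    by (simp add: card_image inj_on_subset)
  moreover have "card {z \<in> ?A \<union> ?B. hmidpoint z} = ?l (int p)"
    unfolding crossings_midpoints using inj_crossing[OF p_pos]
    by (simp add: card_image inj_on_subset Collect_conv_if)
  ultimately show ?thesis by linarith
qed

end

section \<open>Light points on a vertical line\<close>

locale Vline_in_block = even_param +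
  fixes y0 m :: int
begin

text \<open>The lines of slope -2 * a / \<omega> crossing the segment x = m, y0 \<le> y \<le> y0 + \<omega> are those
  with intercept in {window_start a..<window_start a + \<omega>}, provided no crossing falls on an
  endpoint (not_dvd_window).\<close>

definition window_start :: "int \<Rightarrow> int" where
  "window_start a = (y0 * \<omega> + 2 * a * m) div \<omega> + 1"

abbreviation light_window :: "int \<Rightarrow> int set" where
  "light_window a \<equiv> {c \<in> {window_start a..<window_start a + \<omega>}. light_intercept (signed_capacity m) c}"

definition crossing :: "int \<Rightarrow> int \<Rightarrow> real \<times> real" where
  "crossing a c = (of_int m, of_int c - 2 * of_int a * of_int m / of_int \<omega>)"

lemma not_dvd_window:
  assumes "signed_capacity m \<noteq> 0" "coprime a \<omega>"
  shows "\<not> \<omega> dvd y0 * \<omega> + 2 * a * m"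
proof
  assume "\<omega> dvd y0 * \<omega> + 2 * a * m"
  then have "\<omega> dvd (2 * a) * m" by (simp add: dvd_add_right_iff mult.assoc)
  then have "\<omega> dvd m"
    using assms(2) coprime_2_omega by (simp add: coprime_commute coprime_dvd_mult_right_iff)
  then show False using assms(1) signed_capacity_multiple by (auto elim!: dvdE)
qed

lemma light_points:
  assumes "signed_capacity m \<noteq> 0" "x0 \<le> m" "m \<le> x0 + \<omega>"
  shows "{z \<in> {z. fst z = of_int m} \<inter> omega_square x0 y0. light_wrt p q (F_V p q) z}
    = crossing (int p) ` light_window (int p) \<union> crossing (int q) ` light_window (int q)"
proof -
  let ?h = "signed_capacity m"
  have crossings: "{z :: real \<times> real. fst z = of_int m \<and> of_int y0 \<le> snd z \<and> snd z \<le> of_int y0 + of_int \<omega> \<and>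
        (\<exists>c. snd z = - (2 * of_int a / of_int \<omega>) * fst z + of_int c \<and> light_intercept ?h c)}
      = crossing a ` light_window a" if "0 < a" "coprime a \<omega>" for a
    using Vline_slope_crossings[OF omega_pos not_dvd_window[OF assms(1) that(2)]]
    by (simp add: crossing_def[abs_def] window_start_def)
  have "{z \<in> {z. fst z = of_int m} \<inter> omega_square x0 y0. light_wrt p q (F_V p q) z}
    = {z :: real \<times> real. fst z = of_int m \<and> of_int y0 \<le> snd z \<and> snd z \<le> of_int y0 + of_int \<omega> \<and>
        (\<exists>c. snd z = - (2 * of_int (int p) / of_int \<omega>) * fst z + of_int c \<and> light_intercept ?h c)}
    \<union> {z. fst z = of_int m \<and> of_int y0 \<le> snd z \<and> snd z \<le> of_int y0 + of_int \<omega> \<and>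
        (\<exists>c. snd z = - (2 * of_int (int q) / of_int \<omega>) * fst z + of_int c \<and> light_intercept ?h c)}"
    using assms(2,3) light_wrt_iff[OF F_V_eq[where n = m]] by (auto simp: mem_Times_iff bigP_eq bigQ_eq)
  then show ?thesis
    unfolding crossings[OF p_pos coprime_p_omega] crossings[OF q_pos coprime_q_omega] .
qed

lemma crossings_disjoint:
  assumes "signed_capacity m \<noteq> 0"
  shows "crossing (int p) c \<noteq> crossing (int q) c'"
proof
  assume "crossing (int p) c = crossing (int q) c'"
  then have "real_of_int c * of_int \<omega> - 2 * of_int p * of_int m = of_int c' * of_int \<omega> - 2 * of_int q * of_int m"
    using omega_pos by (simp add: crossing_def field_simps)
  then have "real_of_int (c * \<omega> - 2 * int p * m) = of_int (c' * \<omega> - 2 * int q * m)"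
    by simp
  then have "c * \<omega> - 2 * int p * m = c' * \<omega> - 2 * int q * m"
    by (simp only: of_int_eq_iff)
  then have "2 * (2 * int p) * m = \<omega> * (c - c' + 2 * m)" by (simp add: algebra_simps)
  then have "\<omega> dvd m"
    using coprime_2_omega coprime_p_omega
    by (metis coprime_commute coprime_dvd_mult_right_iff coprime_mult_left_iff dvd_triv_left)
  then show False using assms signed_capacity_multiple by (auto elim!: dvdE)
qed

lemma light_count_eq:
  assumes "x0 \<le> m" "m \<le> x0 + \<omega>"
  shows "light_count p q {z. fst z = of_int m} (omega_square x0 y0) = nat \<bar>signed_capacity m\<bar>"
proof -
  let ?h = "signed_capacity m"
  let ?X = "{z \<in> {z. fst z = of_int m} \<inter> omega_square x0 y0. light_wrt p q (F_V p q) z}"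
  have "light_count p q {z. fst z = of_int m} (omega_square x0 y0) = card ?X + card {z \<in> ?X. hmidpoint z}"
    unfolding light_count_def Let_def segment_light_points_Vline[OF refl] ..
  moreover have "card {z \<in> ?X. hmidpoint z} = 0"
  proof -
    have "{z \<in> ?X. hmidpoint z} = {}" using not_hmidpoint_Vline by auto
    then show ?thesis by (simp only: card.empty)
  qed
  moreover have "card ?X = nat \<bar>?h\<bar>"
  proof (cases "?h = 0")
    case True
    have "\<not> light_wrt p q (F_V p q) z" if "fst z = of_int m" for z
      using light_wrt_iff[of "F_V p q", OF F_V_eq[OF that]] True by (simp add: light_intercept_def lighter_def)
    then have "?X = {}" by auto
    then have "card ?X = 0" by (simp only: card.empty)
    with True show ?thesis by simp
  next
    case False
    have "card (light_window a) = nat \<bar>?h\<bar> div 2" for a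
      using card_light_intercept_window[of "window_start a" m 0] by simp
    moreover have "inj_on (crossing a) A" for a A by (rule inj_onI) (simp add: crossing_def)
    moreover have "card ?X = card (crossing (int p) ` light_window (int p)) + card (crossing (int q) ` light_window (int q))"
      unfolding light_points[OF False assms] using crossings_disjoint[OF False]
      by (intro card_Un_disjoint finite_imageI finite_int_interval_filter) blast
    ultimately have "card ?X = nat \<bar>?h\<bar> div 2 + nat \<bar>?h\<bar> div 2"
      by (simp add: card_image)
    then show ?thesis using even_signed_capacity[of m] by (auto simp: nat_abs_mult_distrib elim!: evenE)
  qed
  ultimately show ?thesis by simp
qed

end

section \<open>Lines meeting a block\<close>

context even_param
begin

lemma card_Hlines_capacity_block:
  assumes "B \<in> blocks p q" "even k" "k \<le> omega p q"
  shows "card {L \<in> Hlines. capacity p q L = real k \<and> L \<inter> B \<noteq> {}} = 2"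
proof -
  obtain i j where B: "B = omega_square (i * \<omega>\<^sup>2) (j * \<omega>)" using block_cases[OF assms(1)] .
  have "card {L \<in> Hlines. capacity p q L = real k \<and> L \<inter> B \<noteq> {}}
      = card {n \<in> {j * \<omega>..j * \<omega> + \<omega>}. \<bar>signed_capacity n\<bar> = int k}"
    unfolding B Hlines_capacity_in_square by (rule card_image[OF inj_on_subset[OF inj_Hline subset_UNIV]])
  also have "\<dots> = 2" using assms(2,3) by (intro card_capacity_window) (simp_all add: omega_def)
  finally show ?thesis .
qed

lemma card_Vlines_capacity_block:
  assumes "B \<in> blocks p q" "even k" "k \<le> omega p q"
  shows "card {L \<in> Vlines. capacity p q L = real k \<and> L \<inter> B \<noteq> {}} = 2"
proof -
  obtain i j where B: "B = omega_square (i * \<omega>\<^sup>2) (j * \<omega>)" using block_cases[OF assms(1)] .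
  have "card {L \<in> Vlines. capacity p q L = real k \<and> L \<inter> B \<noteq> {}}
      = card {n \<in> {(i * \<omega>) * \<omega>..(i * \<omega>) * \<omega> + \<omega>}. \<bar>signed_capacity n\<bar> = int k}"
    unfolding B Vlines_capacity_in_square power2_eq_square mult.assoc
    by (rule card_image[OF inj_on_subset[OF inj_Vline subset_UNIV]])
  also have "\<dots> = 2" using assms(2,3) by (intro card_capacity_window) (simp_all add: omega_def)
  finally show ?thesis .
qed

lemma light_count_block:
  assumes "B \<in> blocks p q" "L \<in> Hlines \<union> Vlines" "L \<inter> B \<noteq> {}"
  shows "real (light_count p q L B) = capacity p q L"
proof -
  obtain i j where B: "B = omega_square (i * \<omega>\<^sup>2) (j * \<omega>)" using block_cases[OF assms(1)] .
  from assms(2) consider n where "L = {z. snd z = of_int n}" | m where "L = {z. fst z = of_int m}"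
    by (auto simp: Hlines_def Vlines_def)
  then show ?thesis
  proof cases
    case (1 n)
    interpret Hline_in_block p q i n ..
    have "j * \<omega> \<le> n" "n \<le> j * \<omega> + \<omega>"
      using assms(3) unfolding 1 B Hline_meets_square_iff of_int_add[symmetric] of_int_mult[symmetric]
        of_int_le_iff by simp_all
    then have "light_count p q L B = nat \<bar>signed_capacity n\<bar>" unfolding 1 B by (rule light_count_eq)
    then show ?thesis by (simp add: 1 capacity_Hline)
  next
    case (2 m)
    interpret Vline_in_block p q "j * \<omega>" m ..
    have "i * \<omega>\<^sup>2 \<le> m" "m \<le> i * \<omega>\<^sup>2 + \<omega>"
      using assms(3) unfolding 2 B Vline_meets_square_iff of_int_add[symmetric] of_int_le_iff by simp_all
    then have "light_count p q L B = nat \<bar>signed_capacity m\<bar>" unfolding 2 B by (rule light_count_eq)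
    then show ?thesis by (simp add: 2 capacity_Vline)
  qed
qed

end

theorem theorem2p5:
  fixes p q k :: nat and B :: "(real \<times> real) set"
  assumes "even_rat_param p q"
    and "B \<in> blocks p q"
    and "even k" and "k \<le> omega p q"
  shows "card {L \<in> Hlines. capacity p q L = real k \<and> L \<inter> B \<noteq> {}} = 2
       \<and> card {L \<in> Vlines. capacity p q L = real k \<and> L \<inter> B \<noteq> {}} = 2
       \<and> (\<forall>L \<in> Hlines \<union> Vlines. capacity p q L = real k \<and> L \<inter> B \<noteq> {}
              \<longrightarrow> light_count p q L B = k)"
proof -
  interpret even_param p q by standard (fact assms(1))
  show ?thesis
    using card_Hlines_capacity_block[OF assms(2-4)] card_Vlines_capacity_block[OF assms(2-4)]
      light_count_block[OF assms(2)] by (metis of_nat_eq_iff)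
qed

end
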